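(* Let $\mathfrak{f}=\sum_{\lambda\vdash4}c_\lambda\mathfrak{p}_\lambda$ with real $c_\lambda$. Then $\mathfrak{f}\in\mathfrak{P}_4$ if and only if for every $\alpha\in[0,1]$ the bivariate form $\Phi^\alpha_{\mathfrak{f}}(x,y)=\sum_{\lambda\vdash4}c_\lambda\Phi_\lambda(\alpha,1-\alpha,x,y)$ is nonnegative on $\mathbb{R}^2$.
   Context: $p^{(n)}_i=\frac1n(x_1^i+\dots+x_n^i)$, $p^{(n)}_\lambda=\prod_i p^{(n)}_{\lambda_i}$; $\mathfrak{p}_\lambda$ is the sequence $(p^{(n)}_\lambda)_{n\ge4}$, and $\mathfrak{f}=\sum c_\lambda\mathfrak{p}_\lambda$ is the sequence $(\sum c_\lambda p^{(n)}_\lambda)_{n\ge4}$. $\mathfrak{P}_4$ is the set of such sequences all of whose terms are nonnegative forms. For $\lambda=(\lambda_1,\dots,\lambda_l)\vdash4$, $\Phi_\lambda(s_1,s_2,t_1,t_2)=\prod_{i=1}^l(s_1t_1^{\lambda_i}+s_2t_2^{\lambda_i})$. *)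

theory Defs
  imports Complex_Main
begin

definition partitions :: "nat \<Rightarrow> nat list set" where
  "partitions n = {xs. sorted_wrt (\<ge>) xs \<and> 0 \<notin> set xs \<and> sum_list xs = n}"

text \<open>Normalized power sum p^(n)_i(x) = (x_1^i + ... + x_n^i)/n, variables x_0..x_{n-1}.\<close>
definition psum :: "nat \<Rightarrow> nat \<Rightarrow> (nat \<Rightarrow> real) \<Rightarrow> real" where
  "psum n i x = (\<Sum>j<n. x j ^ i) / real n"

definition ppart :: "nat \<Rightarrow> nat list \<Rightarrow> (nat \<Rightarrow> real) \<Rightarrow> real" where
  "ppart n lam x = prod_list (map (\<lambda>i. psum n i x) lam)"

text \<open>The sequence f = sum c_lambda p_lambda lies in P_4: every term (n >= 4) is a nonnegative form.\<close>
definition in_P4 :: "(nat list \<Rightarrow> real) \<Rightarrow> bool" where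
  "in_P4 c \<longleftrightarrow> (\<forall>n\<ge>4. \<forall>x::nat \<Rightarrow> real. 0 \<le> (\<Sum>lam\<in>partitions 4. c lam * ppart n lam x))"

definition Phi :: "nat list \<Rightarrow> real \<Rightarrow> real \<Rightarrow> real \<Rightarrow> real \<Rightarrow> real" where
  "Phi lam s1 s2 t1 t2 = prod_list (map (\<lambda>k. s1 * t1 ^ k + s2 * t2 ^ k) lam)"

end

theory Submission
  imports Defs
begin

text \<open>
  Both sides evaluate one form \<open>\<Sum> c\<^sub>\<lambda> m\<^sub>\<lambda>\<close> on a moment sequence \<open>m\<close>: on the
  normalized power sums of \<open>n\<close> points, resp. on the moments of the two-point distribution
  \<open>\<alpha> \<delta>\<^sub>x + (1 - \<alpha>) \<delta>\<^sub>y\<close>. Placing \<open>k\<close> of \<open>n\<close> points at \<open>x\<close> and the rest at \<open>y\<close>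
  with \<open>k / n \<rightarrow> \<alpha>\<close> gives the forward direction by continuity.

  Conversely, let \<open>c [4] > 0\<close>. Given points with power sums \<open>p\<^sub>i\<close>, choose a two-point
  distribution with the same first two moments whose atoms satisfy
  \<open>r + s = - c [3,1] p\<^sub>1 / (2 c [4])\<close>. The two values of the form then differ by \<open>c [4]\<close>
  times the mean of \<open>(t - r)\<^sup>2 (t - s)\<^sup>2\<close> over the points, because this quartic vanishes on
  both atoms. The case \<open>c [4] = 0\<close> follows by perturbing \<open>c [4]\<close>, and \<open>c [4] \<ge> 0\<close> is
  forced by the distributions \<open>\<alpha> \<delta>\<^sub>1 + (1 - \<alpha>) \<delta>\<^sub>0\<close> as \<open>\<alpha> \<rightarrow> 0\<close>.
\<close>

definition moment_form :: "(nat list \<Rightarrow> real) \<Rightarrow> (nat \<Rightarrow> real) \<Rightarrow> real" where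
  "moment_form c m = (\<Sum>lam\<in>partitions 4. c lam * prod_list (map m lam))"

definition two_point_moment :: "real \<Rightarrow> real \<Rightarrow> real \<Rightarrow> nat \<Rightarrow> real" where
  "two_point_moment \<alpha> x y i = \<alpha> * x ^ i + (1 - \<alpha>) * y ^ i"

lemma partitions_4: "partitions 4 = {[4], [3,1], [2,2], [2,1,1], [1,1,1,1]}"
proof
  show "{[4], [3,1], [2,2], [2,1,1], [1,1,1,1]} \<subseteq> partitions 4"
    by (auto simp: partitions_def)
next
  show "partitions 4 \<subseteq> {[4], [3,1], [2,2], [2,1,1], [1,1,1,1]}"
  proof
    fix xs assume "xs \<in> partitions 4"
    then have xs: "sorted_wrt (\<ge>) xs" "0 \<notin> set xs" "sum_list xs = 4"
      by (auto simp: partitions_def)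
    consider "xs = []" | a where "xs = [a]" | a b where "xs = [a, b]" | a b c where "xs = [a, b, c]"
      | a b c d where "xs = [a, b, c, d]" | a b c d e ys where "xs = a # b # c # d # e # ys"
      by (metis list.exhaust)
    then show "xs \<in> {[4], [3,1], [2,2], [2,1,1], [1,1,1,1]}"
      by cases (use xs in auto)
  qed
qed

lemma moment_form_expand:
  "moment_form c m = c [4] * m 4 + c [3,1] * m 3 * m 1 + c [2,2] * (m 2)\<^sup>2
     + c [2,1,1] * m 2 * (m 1)\<^sup>2 + c [1,1,1,1] * (m 1) ^ 4"
  by (simp add: moment_form_def partitions_4 power2_eq_square power4_eq_xxxx algebra_simps)

lemma psum_two_valued:
  assumes "k \<le> n" "0 < n"
  shows "psum n i (\<lambda>j. if j < k then x else y) = two_point_moment (real k / real n) x y i"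
proof -
  have "{..<n} \<inter> {j. j < k} = {..<k}" "{..<n} \<inter> - {j. j < k} = {k..<n}"
    using assms(1) by auto
  then have "(\<Sum>j<n. (if j < k then x else y) ^ i) = (\<Sum>j<k. x ^ i) + (\<Sum>j=k..<n. y ^ i)"
    by (simp add: if_distrib[of "\<lambda>t. t ^ i"] sum.If_cases)
  then show ?thesis
    using assms by (simp add: psum_def two_point_moment_def of_nat_diff field_simps)
qed

lemma floor_fraction_tendsto:
  assumes "0 \<le> a"
  shows "(\<lambda>n. real (nat \<lfloor>a * real n\<rfloor>) / real n) \<longlonglongrightarrow> a"
proof (rule tendsto_sandwich)
  have "(\<lambda>n. a - 1 / real n) \<longlonglongrightarrow> a - 0"
    by (intro tendsto_intros lim_1_over_n)
  then show "(\<lambda>n. a - 1 / real n) \<longlonglongrightarrow> a" by simp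
  show "\<forall>\<^sub>F n in sequentially. a - 1 / real n \<le> real (nat \<lfloor>a * real n\<rfloor>) / real n"
    using eventually_gt_at_top[of 0]
  proof eventually_elim
    case (elim n)
    have "a - 1 / real n = (a * real n - 1) / real n"
      using elim by (simp add: field_simps)
    also have "\<dots> \<le> real (nat \<lfloor>a * real n\<rfloor>) / real n"
      using assms by (intro divide_right_mono) linarith+
    finally show ?case .
  qed
  show "\<forall>\<^sub>F n in sequentially. real (nat \<lfloor>a * real n\<rfloor>) / real n \<le> a"
    using eventually_gt_at_top[of 0]
  proof eventually_elim
    case (elim n)
    have "real (nat \<lfloor>a * real n\<rfloor>) \<le> a * real n"
      using assms by (simp add: zero_le_mult_iff)
    then show ?case using elim by (simp add: field_simps)
  qed
qed simp

lemma two_point_form_nonneg_if_psum_form_nonneg: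
  assumes psum_nonneg: "\<forall>n\<ge>4. \<forall>x. 0 \<le> moment_form c (\<lambda>i. psum n i x)"
    and \<alpha>: "\<alpha> \<in> {0..1}"
  shows "0 \<le> moment_form c (two_point_moment \<alpha> x y)"
proof -
  define k where "k n = nat \<lfloor>\<alpha> * real n\<rfloor>" for n
  have k_le: "k n \<le> n" for n
  proof -
    have "\<alpha> * real n \<le> real n"
      using \<alpha> by (simp add: mult_left_le_one_le)
    then show ?thesis unfolding k_def by linarith
  qed
  have "(\<lambda>n. real (k n) / real n) \<longlonglongrightarrow> \<alpha>"
    unfolding k_def using \<alpha> by (intro floor_fraction_tendsto) simp
  then have "(\<lambda>n. moment_form c (two_point_moment (real (k n) / real n) x y))
      \<longlonglongrightarrow> moment_form c (two_point_moment \<alpha> x y)"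
    unfolding moment_form_expand two_point_moment_def by (intro tendsto_intros)
  moreover have "0 \<le> moment_form c (two_point_moment (real (k n) / real n) x y)" if "n \<ge> 4" for n
  proof -
    have "0 \<le> moment_form c (\<lambda>i. psum n i (\<lambda>j. if j < k n then x else y))"
      using psum_nonneg that by blast
    then show ?thesis
      using psum_two_valued[OF k_le, of n] that by simp
  qed
  ultimately show ?thesis
    by (intro LIMSEQ_le_const) auto
qed

lemma psum_quartic_combination:
  assumes "0 < n"
  shows "(\<Sum>j<n. b0 + b1 * x j + b2 * x j ^ 2 + b3 * x j ^ 3 + b4 * x j ^ 4) / real n
    = b0 + b1 * psum n 1 x + b2 * psum n 2 x + b3 * psum n 3 x + b4 * psum n 4 x"
  using assms by (simp add: psum_def sum.distrib sum_distrib_left add_divide_distrib)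

lemma psum_1_squared_le:
  assumes "0 < n"
  shows "(psum n 1 x)\<^sup>2 \<le> psum n 2 x"
proof -
  define \<mu> where "\<mu> = psum n 1 x"
  have "0 \<le> (\<Sum>j<n. (x j - \<mu>)\<^sup>2) / real n"
    by (simp add: sum_nonneg)
  also have "\<dots> = (\<Sum>j<n. \<mu>\<^sup>2 + (- 2 * \<mu>) * x j + 1 * x j ^ 2 + 0 * x j ^ 3 + 0 * x j ^ 4) / real n"
    by (simp add: power2_eq_square algebra_simps)
  also have "\<dots> = psum n 2 x - \<mu>\<^sup>2"
    using assms by (simp only: psum_quartic_combination) (simp add: \<mu>_def power2_eq_square)
  finally show ?thesis by (simp add: \<mu>_def)
qed

text \<open>The expectation of \<open>(t - r)\<^sup>2 (t - s)\<^sup>2\<close> under a distribution with moments \<open>m\<close>.\<close>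
definition quartic_moment :: "real \<Rightarrow> real \<Rightarrow> (nat \<Rightarrow> real) \<Rightarrow> real" where
  "quartic_moment r s m = (r * s)\<^sup>2 - 2 * r * s * (r + s) * m 1 + ((r + s)\<^sup>2 + 2 * r * s) * m 2
     - 2 * (r + s) * m 3 + m 4"

lemma quartic_moment_psum_nonneg:
  assumes "0 < n"
  shows "0 \<le> quartic_moment r s (\<lambda>i. psum n i x)"
proof -
  have "0 \<le> (\<Sum>j<n. (x j - r)\<^sup>2 * (x j - s)\<^sup>2) / real n"
    by (simp add: sum_nonneg)
  also have "\<dots> = (\<Sum>j<n. (r * s)\<^sup>2 + (- 2 * r * s * (r + s)) * x j + ((r + s)\<^sup>2 + 2 * r * s) * x j ^ 2
      + (- 2 * (r + s)) * x j ^ 3 + 1 * x j ^ 4) / real n"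
    by (simp add: power2_eq_square power3_eq_cube power4_eq_xxxx algebra_simps)
  also have "\<dots> = quartic_moment r s (\<lambda>i. psum n i x)"
    using assms by (simp only: psum_quartic_combination) (simp add: quartic_moment_def algebra_simps)
  finally show ?thesis .
qed

lemma quartic_moment_two_point: "quartic_moment r s (two_point_moment \<alpha> r s) = 0"
  by (simp add: quartic_moment_def two_point_moment_def power2_eq_square power3_eq_cube
      power4_eq_xxxx algebra_simps)

lemma nonneg_factors_with_difference:
  fixes K v :: real
  assumes "0 \<le> v"
  obtains d1 d2 where "0 \<le> d1" "0 \<le> d2" "d1 - d2 = K" "d1 * d2 = v"
proof -
  define D where "D = sqrt (K\<^sup>2 + 4 * v)"
  have "sqrt (K\<^sup>2) \<le> D"
    unfolding D_def using assms by (intro real_sqrt_le_mono) simp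
  then have "\<bar>K\<bar> \<le> D" by simp
  moreover have "D\<^sup>2 = K\<^sup>2 + 4 * v"
    unfolding D_def using assms by simp
  ultimately show thesis
    by (intro that[of "(D + K) / 2" "(D - K) / 2"]) (auto simp: power2_eq_square field_simps)
qed

lemma two_point_moments_exist:
  fixes \<mu> p2 S :: real
  assumes "\<mu>\<^sup>2 \<le> p2"
  obtains \<alpha> r s where "\<alpha> \<in> {0..1}" "r + s = S"
    "two_point_moment \<alpha> r s 1 = \<mu>" "two_point_moment \<alpha> r s 2 = p2"
proof -
  obtain d1 d2 where d: "0 \<le> d1" "0 \<le> d2" "d1 - d2 = S - 2 * \<mu>" "d1 * d2 = p2 - \<mu>\<^sup>2"
    using nonneg_factors_with_difference assms by (metis diff_ge_0_iff_ge)
  define r s where "r = \<mu> + d1" and "s = \<mu> - d2"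
  have rs: "r + s = S"
    using d by (simp add: r_def s_def)
  show ?thesis
  proof (cases "d1 + d2 = 0")
    case True
    with d have "d1 = 0" "d2 = 0" by auto
    with d have "two_point_moment 0 r s 1 = \<mu>" "two_point_moment 0 r s 2 = p2"
      by (simp_all add: two_point_moment_def r_def s_def)
    with rs show ?thesis by (intro that[of 0]) auto
  next
    case False
    with d have pos: "0 < d1 + d2" by simp
    define \<alpha> where "\<alpha> = d2 / (d1 + d2)"
    have "\<alpha> \<in> {0..1}"
      using d pos by (simp add: \<alpha>_def)
    have weights: "(d1 + d2) * \<alpha> = d2" "(d1 + d2) * (1 - \<alpha>) = d1"
      using pos by (simp_all add: \<alpha>_def field_simps)
    have scaled: "(d1 + d2) * two_point_moment \<alpha> r s i = d2 * r ^ i + d1 * s ^ i" for i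
    proof -
      have "(d1 + d2) * two_point_moment \<alpha> r s i
          = ((d1 + d2) * \<alpha>) * r ^ i + ((d1 + d2) * (1 - \<alpha>)) * s ^ i"
        by (simp add: two_point_moment_def algebra_simps)
      then show ?thesis by (simp only: weights)
    qed
    have "(d1 + d2) * two_point_moment \<alpha> r s 1 = (d1 + d2) * \<mu>"
      unfolding scaled by (simp add: r_def s_def algebra_simps)
    then have "two_point_moment \<alpha> r s 1 = \<mu>"
      using pos by simp
    moreover have "(d1 + d2) * two_point_moment \<alpha> r s 2 = (d1 + d2) * (\<mu>\<^sup>2 + d1 * d2)"
      unfolding scaled by (simp add: r_def s_def power2_eq_square algebra_simps)
    then have "two_point_moment \<alpha> r s 2 = p2"
      using pos d(4) by simp
    ultimately show ?thesis
      using that rs \<open>\<alpha> \<in> {0..1}\<close> by blast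
  qed
qed

lemma moment_form_le_of_quartic_moment:
  assumes "0 \<le> c [4]" and "m 1 = w 1" "m 2 = w 2"
    and "0 \<le> quartic_moment r s m" "quartic_moment r s w = 0"
    and "2 * c [4] * (r + s) + c [3,1] * m 1 = 0"
  shows "moment_form c w \<le> moment_form c m"
proof -
  have fourth: "m 4 - w 4 = quartic_moment r s m + 2 * (r + s) * (m 3 - w 3)"
    using assms(2,3,5) by (simp add: quartic_moment_def algebra_simps)
  have "moment_form c m - moment_form c w = c [4] * (m 4 - w 4) + c [3,1] * m 1 * (m 3 - w 3)"
    using assms(2,3) by (simp add: moment_form_expand algebra_simps)
  also have "\<dots> = c [4] * quartic_moment r s m + (2 * c [4] * (r + s) + c [3,1] * m 1) * (m 3 - w 3)"
    unfolding fourth by (simp add: algebra_simps)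
  also have "\<dots> = c [4] * quartic_moment r s m"
    using assms(6) by simp
  finally show ?thesis
    using mult_nonneg_nonneg[OF assms(1,4)] by linarith
qed

lemma psum_form_nonneg_of_pos:
  assumes c4: "0 < c [4]" and n: "0 < n"
    and two_point_nonneg: "\<forall>\<alpha>\<in>{0..1}. \<forall>x y. 0 \<le> moment_form c (two_point_moment \<alpha> x y)"
  shows "0 \<le> moment_form c (\<lambda>i. psum n i x)"
proof -
  define m where "m i = psum n i x" for i
  \<comment> \<open>\<open>r + s\<close> is chosen so that the third moments drop out of the comparison\<close>
  obtain \<alpha> r s where \<alpha>: "\<alpha> \<in> {0..1}" and rs: "r + s = - c [3,1] * m 1 / (2 * c [4])"
    and moments: "two_point_moment \<alpha> r s 1 = m 1" "two_point_moment \<alpha> r s 2 = m 2"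
    using two_point_moments_exist psum_1_squared_le[OF n] unfolding m_def by metis
  have "moment_form c (two_point_moment \<alpha> r s) \<le> moment_form c m"
  proof (rule moment_form_le_of_quartic_moment)
    show "0 \<le> quartic_moment r s m"
      unfolding m_def by (rule quartic_moment_psum_nonneg[OF n])
    show "2 * c [4] * (r + s) + c [3,1] * m 1 = 0"
      using c4 by (simp add: rs)
  qed (use c4 moments quartic_moment_two_point in auto)
  then show ?thesis
    using two_point_nonneg \<alpha> unfolding m_def by (meson order_trans)
qed

lemma c4_nonneg_if_two_point_form_nonneg:
  assumes "\<forall>\<alpha>\<in>{0..1}. 0 \<le> moment_form c (two_point_moment \<alpha> 1 0)"
  shows "0 \<le> c [4]"
proof -
  define g where "g \<alpha> = c [4] + (c [3,1] + c [2,2]) * \<alpha> + c [2,1,1] * \<alpha>\<^sup>2 + c [1,1,1,1] * \<alpha> ^ 3"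
    for \<alpha> :: real
  have form: "moment_form c (two_point_moment \<alpha> 1 0) = \<alpha> * g \<alpha>" for \<alpha>
    by (simp add: moment_form_expand two_point_moment_def g_def power2_eq_square power3_eq_cube
        power4_eq_xxxx algebra_simps)
  have "\<forall>\<^sub>F \<alpha> in at_right 0. 0 \<le> g \<alpha>"
    using eventually_at_right_real[OF zero_less_one]
  proof eventually_elim
    case (elim \<alpha>)
    then have "0 \<le> \<alpha> * g \<alpha>"
      using assms by (simp add: form[symmetric])
    then show ?case
      using elim by (simp add: zero_le_mult_iff)
  qed
  moreover have "(g \<longlongrightarrow> g 0) (at_right 0)"
    unfolding g_def by (intro tendsto_intros)
  ultimately have "0 \<le> g 0"
    by (intro tendsto_lowerbound) auto
  then show ?thesis by (simp add: g_def)
qed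

lemma moment_form_increase_c4:
  "moment_form (c([4] := c [4] + e)) m = moment_form c m + e * m 4"
  by (simp add: moment_form_expand algebra_simps)

lemma psum_form_nonneg_if_two_point_form_nonneg:
  assumes two_point_nonneg: "\<forall>\<alpha>\<in>{0..1}. \<forall>x y. 0 \<le> moment_form c (two_point_moment \<alpha> x y)"
    and n: "0 < n"
  shows "0 \<le> moment_form c (\<lambda>i. psum n i x)"
proof -
  have c4: "0 \<le> c [4]"
    using two_point_nonneg by (intro c4_nonneg_if_two_point_form_nonneg) blast
  have perturbed: "0 \<le> moment_form c (\<lambda>i. psum n i x) + e * psum n 4 x" if e: "0 < e" for e
  proof -
    have "0 \<le> moment_form (c([4] := c [4] + e)) (\<lambda>i. psum n i x)"
    proof (rule psum_form_nonneg_of_pos)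
      show "0 < (c([4] := c [4] + e)) [4]"
        using c4 e by simp
      show "\<forall>\<alpha>\<in>{0..1}. \<forall>y z. 0 \<le> moment_form (c([4] := c [4] + e)) (two_point_moment \<alpha> y z)"
        using two_point_nonneg e by (auto simp: moment_form_increase_c4 two_point_moment_def)
    qed (rule n)
    then show ?thesis
      by (simp add: moment_form_increase_c4)
  qed
  have "\<forall>\<^sub>F e in at_right 0. 0 \<le> moment_form c (\<lambda>i. psum n i x) + e * psum n 4 x"
    using eventually_at_right_less[of 0] by (rule eventually_mono) (rule perturbed)
  moreover have "((\<lambda>e. moment_form c (\<lambda>i. psum n i x) + e * psum n 4 x)
      \<longlongrightarrow> moment_form c (\<lambda>i. psum n i x) + 0 * psum n 4 x) (at_right 0)"
    by (intro tendsto_intros)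
  ultimately show ?thesis
    by (intro tendsto_lowerbound) auto
qed

theorem proposition7p1:
  fixes c :: "nat list \<Rightarrow> real"
  shows "in_P4 c \<longleftrightarrow>
    (\<forall>\<alpha>\<in>{0..1::real}. \<forall>x y :: real.
       0 \<le> (\<Sum>lam\<in>partitions 4. c lam * Phi lam \<alpha> (1 - \<alpha>) x y))"
proof -
  have in_P4_iff: "in_P4 c \<longleftrightarrow> (\<forall>n\<ge>4. \<forall>x. 0 \<le> moment_form c (\<lambda>i. psum n i x))"
    by (simp add: in_P4_def moment_form_def ppart_def)
  have Phi_sum: "(\<Sum>lam\<in>partitions 4. c lam * Phi lam \<alpha> (1 - \<alpha>) x y)
      = moment_form c (two_point_moment \<alpha> x y)" for \<alpha> x y
    unfolding Phi_def moment_form_def two_point_moment_def[abs_def] ..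
  show ?thesis
    unfolding in_P4_iff Phi_sum
    using two_point_form_nonneg_if_psum_form_nonneg psum_form_nonneg_if_two_point_form_nonneg
    by fastforce
qed

end
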